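(* Let $\Lambda=\{\Lambda_\omega\in B(\mathcal H,\mathcal K_\omega):\omega\in\Omega\}$ and $\Theta=\{\Theta_\omega\in B(\mathcal H,\mathcal K_\omega):\omega\in\Omega\}$ be strongly disjoint Parseval continuous $g$-frames for $\mathcal H$ and let $L_1,L_2\in B(\mathcal H)$. Then $L_1^*L_1+L_2^*L_2=I$ if and only if $\{\Lambda_\omega L_1+\Theta_\omega L_2\in B(\mathcal H,\mathcal K_\omega):\omega\in\Omega\}$ is a Parseval continuous $g$-frame. In particular, for $\alpha,\beta\in\mathbb C$, $\{\alpha\Lambda_\omega+\beta\Theta_\omega:\omega\in\Omega\}$ is a Parseval continuous $g$-frame if and only if $|\alpha|^2+|\beta|^2=1$.
   Context: $\mathcal H$ is a complex Hilbert space, $(\Omega,\mu)$ a measure space with positive measure $\mu$, and $\{\mathcal K_\omega:\omega\in\Omega\}$ a family of complex Hilbert spaces. A map $F$ on $\Omega$ with $F(\omega)\in\mathcal K_\omega$ is strongly measurable if it is measurable as a map $\Omega\to\bigoplus_\omega\mathcal K_\omega$; $\widehat{\mathcal K}$ is the Hilbert space of strongly measurable such $F$ with $\int_\Omega\|F(\omega)\|^2d\mu<\infty$, inner product $\langle F,G\rangle=\int_\Omega\langle F(\omega),G(\omega)\rangle d\mu$. A family $\Lambda=\{\Lambda_\omega\in B(\mathcal H,\mathcal K_\omega)\}$ is a continuous $g$-frame for $\mathcal H$ if $\omega\mapsto\Lambda_\omega f$ is strongly measurable for each $f$ and there are $0<A\le B<\infty$ with $A\|f\|^2\le\int_\Omega\|\Lambda_\omega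 f\|^2d\mu(\omega)\le B\|f\|^2$ for all $f\in\mathcal H$; it is Parseval if $\int_\Omega\|\Lambda_\omega f\|^2d\mu=\|f\|^2$ for all $f$. Its analysis operator $T_\Lambda^*:\mathcal H\to\widehat{\mathcal K}$ is $(T_\Lambda^*f)(\omega)=\Lambda_\omega f$. Two continuous $g$-frames $\Lambda,\Theta$ are strongly disjoint if $\mathrm{Range}\,T_\Lambda^*\perp\mathrm{Range}\,T_\Theta^*$ in $\widehat{\mathcal K}$. *)

theory Defs
  imports "HOL-Analysis.Analysis"
begin

class complex_vector = real_vector +
  fixes scaleC :: "complex \<Rightarrow> 'a \<Rightarrow> 'a"
  assumes scaleC_add_right: "scaleC a (x + y) = scaleC a x + scaleC a y"
    and scaleC_add_left: "scaleC (a + b) x = scaleC a x + scaleC b x"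
    and scaleC_scaleC: "scaleC a (scaleC b x) = scaleC (a * b) x"
    and scaleC_one: "scaleC 1 x = x"
    and scaleR_scaleC: "scaleR r x = scaleC (complex_of_real r) x"

class complex_inner = complex_vector + real_normed_vector +
  fixes cinner :: "'a \<Rightarrow> 'a \<Rightarrow> complex"
  assumes cinner_commute: "cinner x y = cnj (cinner y x)"
    and cinner_add_left: "cinner (x + y) z = cinner x z + cinner y z"
    and cinner_scaleC_left: "cinner (scaleC r x) y = r * cinner x y"
    and cinner_self_real: "Im (cinner x x) = 0"
    and cinner_self_nonneg: "0 \<le> Re (cinner x x)"
    and cinner_eq_zero_iff: "cinner x x = 0 \<longleftrightarrow> x = 0"
    and norm_eq_sqrt_cinner: "norm x = sqrt (Re (cinner x x))"

class chilbert_space = complex_inner + complete_space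

definition clinear :: "('a::complex_vector \<Rightarrow> 'b::complex_vector) \<Rightarrow> bool" where
  "clinear f \<longleftrightarrow> (\<forall>x y. f (x + y) = f x + f y) \<and> (\<forall>c x. f (scaleC c x) = scaleC c (f x))"

definition bounded_clinear :: "('a::complex_inner \<Rightarrow> 'b::complex_inner) \<Rightarrow> bool" where
  "bounded_clinear f \<longleftrightarrow> clinear f \<and> (\<exists>K. \<forall>x. norm (f x) \<le> norm x * K)"

definition cadjoint :: "('a::complex_inner \<Rightarrow> 'b::complex_inner) \<Rightarrow> ('b \<Rightarrow> 'a)" where
  "cadjoint L = (THE A. \<forall>x y. cinner (L x) y = cinner x (A y))"

definition closed_csubspace :: "'a::complex_inner set \<Rightarrow> bool" where
  "closed_csubspace S \<longleftrightarrow> 0 \<in> S \<and> (\<forall>x\<in>S. \<forall>y\<in>S. x + y \<in> S)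
     \<and> (\<forall>c. \<forall>x\<in>S. scaleC c x \<in> S) \<and> closed S"

text \<open>The fibres K_w are modelled as closed subspaces of one Hilbert space 'k, which plays
  the role of the direct sum of the K_w.\<close>
definition strongly_measurable :: "'w measure \<Rightarrow> ('w \<Rightarrow> 'k::complex_inner) \<Rightarrow> bool" where
  "strongly_measurable M F \<longleftrightarrow>
     (\<exists>s::nat \<Rightarrow> 'w \<Rightarrow> 'k. (\<forall>i. s i \<in> measurable M borel \<and> finite (range (s i)))
        \<and> (\<forall>\<omega>\<in>space M. (\<lambda>i. s i \<omega>) \<longlonglongrightarrow> F \<omega>))"

definition g_family ::
  "'w measure \<Rightarrow> ('w \<Rightarrow> 'k::complex_inner set) \<Rightarrow> ('w \<Rightarrow> 'h::complex_inner \<Rightarrow> 'k) \<Rightarrow> bool" where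
  "g_family M K \<Lambda> \<longleftrightarrow>
     (\<forall>\<omega>\<in>space M. bounded_clinear (\<Lambda> \<omega>) \<and> range (\<Lambda> \<omega>) \<subseteq> K \<omega>)
     \<and> (\<forall>f. strongly_measurable M (\<lambda>\<omega>. \<Lambda> \<omega> f))"

definition cont_g_frame ::
  "'w measure \<Rightarrow> ('w \<Rightarrow> 'k::complex_inner set) \<Rightarrow> ('w \<Rightarrow> 'h::complex_inner \<Rightarrow> 'k) \<Rightarrow> bool" where
  "cont_g_frame M K \<Lambda> \<longleftrightarrow> g_family M K \<Lambda> \<and>
     (\<exists>A B. 0 < A \<and> A \<le> B \<and>
       (\<forall>f. ennreal (A * (norm f)\<^sup>2) \<le> (\<integral>\<^sup>+\<omega>. ennreal ((norm (\<Lambda> \<omega> f))\<^sup>2) \<partial>M)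
          \<and> (\<integral>\<^sup>+\<omega>. ennreal ((norm (\<Lambda> \<omega> f))\<^sup>2) \<partial>M) \<le> ennreal (B * (norm f)\<^sup>2)))"

definition parseval_cont_g_frame ::
  "'w measure \<Rightarrow> ('w \<Rightarrow> 'k::complex_inner set) \<Rightarrow> ('w \<Rightarrow> 'h::complex_inner \<Rightarrow> 'k) \<Rightarrow> bool" where
  "parseval_cont_g_frame M K \<Lambda> \<longleftrightarrow> cont_g_frame M K \<Lambda> \<and>
     (\<forall>f. (\<integral>\<^sup>+\<omega>. ennreal ((norm (\<Lambda> \<omega> f))\<^sup>2) \<partial>M) = ennreal ((norm f)\<^sup>2))"

definition analysis_op :: "('w \<Rightarrow> 'h \<Rightarrow> 'k) \<Rightarrow> 'h \<Rightarrow> ('w \<Rightarrow> 'k)" where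
  "analysis_op \<Lambda> f = (\<lambda>\<omega>. \<Lambda> \<omega> f)"

definition l2_inner :: "'w measure \<Rightarrow> ('w \<Rightarrow> 'k::complex_inner) \<Rightarrow> ('w \<Rightarrow> 'k) \<Rightarrow> complex" where
  "l2_inner M F G = (LINT \<omega>|M. cinner (F \<omega>) (G \<omega>))"

definition strongly_disjoint ::
  "'w measure \<Rightarrow> ('w \<Rightarrow> 'h \<Rightarrow> 'k::complex_inner) \<Rightarrow> ('w \<Rightarrow> 'h \<Rightarrow> 'k) \<Rightarrow> bool" where
  "strongly_disjoint M \<Lambda> \<Theta> \<longleftrightarrow>
     (\<forall>F\<in>range (analysis_op \<Lambda>). \<forall>G\<in>range (analysis_op \<Theta>). l2_inner M F G = 0)"

end

theory Submission
  imports Defs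
begin

text \<open>
  Strong disjointness says that the sections \<open>\<omega> \<mapsto> \<Lambda>\<^sub>\<omega> g\<close> and \<open>\<omega> \<mapsto> \<Theta>\<^sub>\<omega> h\<close> are
  orthogonal in \<open>L\<^sup>2\<close>, so by Pythagoras and Parsevality
  \<open>\<integral> \<parallel>\<Lambda>\<^sub>\<omega> (L\<^sub>1 f) + \<Theta>\<^sub>\<omega> (L\<^sub>2 f)\<parallel>\<^sup>2 = \<parallel>L\<^sub>1 f\<parallel>\<^sup>2 + \<parallel>L\<^sub>2 f\<parallel>\<^sup>2\<close>.
  Hence the combined family is a Parseval frame iff \<open>\<parallel>L\<^sub>1 f\<parallel>\<^sup>2 + \<parallel>L\<^sub>2 f\<parallel>\<^sup>2 = \<parallel>f\<parallel>\<^sup>2\<close>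
  for all \<open>f\<close>, which by polarization means \<open>L\<^sub>1\<^sup>* L\<^sub>1 + L\<^sub>2\<^sup>* L\<^sub>2 = I\<close>; the scalar case is
  \<open>L\<^sub>1 = \<alpha> I\<close>, \<open>L\<^sub>2 = \<beta> I\<close>. Since adjoints are given only by a description, their
  defining property needs the Riesz representation theorem, obtained from the element of
  minimal norm in a closed affine hyperplane.
\<close>

section \<open>Complex inner product spaces\<close>

lemma cinner_add_right: "cinner x (y + z) = cinner x y + cinner (x::'a::complex_inner) z"
  by (simp only: cinner_commute[of x "y + z"] cinner_commute[of x y] cinner_commute[of x z]
      cinner_add_left complex_cnj_add)

lemma cinner_scaleC_right: "cinner x (scaleC r y) = cnj r * cinner (x::'a::complex_inner) y"
  by (simp only: cinner_commute[of x "scaleC r y"] cinner_commute[of x y] cinner_scaleC_left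
      complex_cnj_mult)

lemma cinner_zero_left [simp]: "cinner 0 (y::'a::complex_inner) = 0"
  using cinner_add_left[of "0::'a" 0 y] by simp

lemma cinner_zero_right [simp]: "cinner (x::'a::complex_inner) 0 = 0"
  by (simp only: cinner_commute[of x 0] cinner_zero_left complex_cnj_zero)

lemma cinner_diff_left: "cinner (x - z) (y::'a::complex_inner) = cinner x y - cinner z y"
  using cinner_add_left[of "x - z" z y] by simp

lemma cinner_diff_right: "cinner x (y - z::'a::complex_inner) = cinner x y - cinner x z"
  using cinner_add_right[of x "y - z" z] by simp

lemma cinner_minus_right: "cinner x (- y::'a::complex_inner) = - cinner x y"
  using cinner_diff_right[of x 0 y] by simp

lemma cinner_self: "cinner x (x::'a::complex_inner) = complex_of_real ((norm x)\<^sup>2)"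
  using cinner_self_real[of x] cinner_self_nonneg[of x] norm_eq_sqrt_cinner[of x]
  by (simp add: complex_eq_iff)

lemma norm_scaleC: "norm (scaleC c x) = cmod c * norm (x::'a::complex_inner)"
proof -
  have "cinner (scaleC c x) (scaleC c x) = (c * cnj c) * cinner x x"
    by (simp add: cinner_scaleC_left cinner_scaleC_right mult.assoc)
  then have "(norm (scaleC c x))\<^sup>2 = (cmod c * norm x)\<^sup>2"
    by (simp only: cinner_self complex_norm_square[symmetric] of_real_mult[symmetric]
        power_mult_distrib of_real_eq_iff)
  then show ?thesis by (simp add: power2_eq_iff_nonneg)
qed

lemma power2_norm_add:
  "(norm (x + y))\<^sup>2 = (norm x)\<^sup>2 + (norm y)\<^sup>2 + 2 * Re (cinner x (y::'a::complex_inner))"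
proof -
  have "cinner (x + y) (x + y) = cinner x x + cinner y y + (cinner x y + cnj (cinner x y))"
    by (simp only: cinner_add_left cinner_add_right cinner_commute[of y x] add_ac)
  then have "Re (cinner (x + y) (x + y)) = Re (cinner x x) + Re (cinner y y) + 2 * Re (cinner x y)"
    by simp
  then show ?thesis by (simp add: cinner_self)
qed

lemma parallelogram_law:
  "(norm (x - y))\<^sup>2 = 2 * (norm x)\<^sup>2 + 2 * (norm y)\<^sup>2 - (norm (x + (y::'a::complex_inner)))\<^sup>2"
  using power2_norm_add[of x y] power2_norm_add[of x "- y"] by (simp add: cinner_minus_right)

lemma norm_cinner_le: "cmod (cinner x y) \<le> norm x * norm (y::'a::complex_inner)"
proof (cases "y = 0")
  case True
  then show ?thesis by simp
next
  case False
  then have ny: "(norm y)\<^sup>2 > 0" by simp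
  define c where "c = cinner x y"
  define t where "t = c / complex_of_real ((norm y)\<^sup>2)"
  have "cinner (x - scaleC t y) (x - scaleC t y)
      = cinner x x - cnj t * c - t * cnj c + t * cnj t * cinner y y"
    by (simp add: cinner_diff_left cinner_diff_right cinner_scaleC_left cinner_scaleC_right
        cinner_commute[of y x] c_def algebra_simps)
  also have "\<dots> = complex_of_real ((norm x)\<^sup>2 - (cmod c)\<^sup>2 / (norm y)\<^sup>2)"
    using ny by (simp add: t_def cinner_self complex_norm_square[symmetric] field_simps)
  finally have "(norm (x - scaleC t y))\<^sup>2 = (norm x)\<^sup>2 - (cmod c)\<^sup>2 / (norm y)\<^sup>2"
    by (simp only: cinner_self of_real_eq_iff)
  then have "(cmod c)\<^sup>2 \<le> (norm x * norm y)\<^sup>2"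
    using ny zero_le_power2[of "norm (x - scaleC t y)"]
    by (simp add: power_mult_distrib pos_divide_le_eq)
  then show ?thesis by (simp add: c_def power2_le_iff_abs_le)
qed

interpretation cinner: bounded_bilinear "cinner :: 'a::complex_inner \<Rightarrow> 'a \<Rightarrow> complex"
proof
  fix a a' b b' :: 'a and r :: real
  show "cinner (a + a') b = cinner a b + cinner a' b" by (rule cinner_add_left)
  show "cinner a (b + b') = cinner a b + cinner a b'" by (rule cinner_add_right)
  show "cinner (scaleR r a) b = scaleR r (cinner a b)"
    by (simp add: scaleR_scaleC cinner_scaleC_left scaleR_conv_of_real)
  show "cinner a (scaleR r b) = scaleR r (cinner a b)"
    by (simp add: scaleR_scaleC cinner_scaleC_right scaleR_conv_of_real)
  show "\<exists>K. \<forall>a b::'a. norm (cinner a b) \<le> norm a * norm b * K"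
    using norm_cinner_le by (intro exI[of _ 1]) auto
qed

lemma sesquilinear_eq_0_if_diagonal_eq_0:
  fixes D :: "'a::complex_vector \<Rightarrow> 'a \<Rightarrow> complex"
  assumes add_left: "\<And>x y z. D (x + y) z = D x z + D y z"
    and add_right: "\<And>x y z. D x (y + z) = D x y + D x z"
    and scaleC_left: "\<And>c x y. D (scaleC c x) y = c * D x y"
    and scaleC_right: "\<And>c x y. D x (scaleC c y) = cnj c * D x y"
    and diagonal: "\<And>x. D x x = 0"
  shows "D x y = 0"
proof -
  have "D (x + y) (x + y) = D x x + D x y + (D y x + D y y)"
    by (simp only: add_left add_right add_ac)
  then have "D y x = - D x y"
    by (simp add: diagonal eq_neg_iff_add_eq_0 add.commute)
  moreover have "D (x + scaleC \<i> y) (x + scaleC \<i> y)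
      = D x x + cnj \<i> * D x y + (\<i> * D y x + \<i> * (cnj \<i> * D y y))"
    by (simp only: add_left add_right scaleC_left scaleC_right) (simp add: algebra_simps)
  ultimately have "2 * \<i> * D x y = 0"
    by (simp add: diagonal algebra_simps)
  then show ?thesis by simp
qed

section \<open>Riesz representation and adjoints\<close>

lemma Cauchy_minimizing_sequence:
  fixes S :: "'a::complex_inner set"
  assumes "convex S" and xs: "\<And>n. xs n \<in> S" and lower: "\<And>w. w \<in> S \<Longrightarrow> d \<le> norm w"
    and lim: "(\<lambda>n. norm (xs n)) \<longlonglongrightarrow> d"
  shows "Cauchy xs"
proof (rule CauchyI)
  fix e :: real
  assume "0 < e"
  have d: "0 \<le> d" using lower[OF xs] lim by (meson LIMSEQ_le_const norm_ge_zero order_trans)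
  have "(\<lambda>n. (norm (xs n))\<^sup>2) \<longlonglongrightarrow> d\<^sup>2"
    using lim by (intro tendsto_power)
  moreover have "d\<^sup>2 < d\<^sup>2 + e\<^sup>2 / 4" using \<open>0 < e\<close> by simp
  ultimately obtain N where N: "\<And>n. n \<ge> N \<Longrightarrow> (norm (xs n))\<^sup>2 < d\<^sup>2 + e\<^sup>2 / 4"
    by (metis (no_types, lifting) eventually_sequentially order_tendstoD(2))
  have "norm (xs m - xs n) < e" if "m \<ge> N" "n \<ge> N" for m n
  proof -
    have "(1/2) *\<^sub>R xs m + (1/2) *\<^sub>R xs n \<in> S"
      using \<open>convex S\<close> xs by (intro convexD) auto
    then have "d \<le> norm ((1/2) *\<^sub>R (xs m + xs n))"
      using lower by (simp add: scaleR_add_right)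
    then have "(2 * d)\<^sup>2 \<le> (norm (xs m + xs n))\<^sup>2"
      using d by (intro power_mono) auto
    then have "(norm (xs m - xs n))\<^sup>2 < e\<^sup>2"
      using parallelogram_law[of "xs m" "xs n"] N[OF \<open>m \<ge> N\<close>] N[OF \<open>n \<ge> N\<close>] by simp
    then show ?thesis using \<open>0 < e\<close> by (simp add: power_less_imp_less_base)
  qed
  then show "\<exists>M. \<forall>m\<ge>M. \<forall>n\<ge>M. norm (xs m - xs n) < e" by blast
qed

lemma closed_convex_min_norm_exists:
  fixes S :: "'a::chilbert_space set"
  assumes "closed S" "convex S" "S \<noteq> {}"
  obtains u where "u \<in> S" "\<And>w. w \<in> S \<Longrightarrow> norm u \<le> norm w"
proof -
  define d where "d = Inf (norm ` S)"
  have bdd: "bdd_below (norm ` S)" by (rule bdd_belowI[of _ 0]) auto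
  have lower: "d \<le> norm w" if "w \<in> S" for w
    unfolding d_def using bdd that by (simp add: cInf_lower)
  have "\<exists>x\<in>S. norm x < d + inverse (real (Suc n))" for n
  proof -
    have "Inf (norm ` S) < d + inverse (real (Suc n))" unfolding d_def by simp
    then show ?thesis using cInf_lessD[of "norm ` S"] \<open>S \<noteq> {}\<close> by blast
  qed
  then obtain xs where xs: "\<And>n. xs n \<in> S" and near: "\<And>n. norm (xs n) < d + inverse (real (Suc n))"
    by metis
  have lim: "(\<lambda>n. norm (xs n)) \<longlonglongrightarrow> d"
  proof (rule tendsto_sandwich[OF _ _ tendsto_const])
    show "\<forall>\<^sub>F n in sequentially. d \<le> norm (xs n)" using lower xs by simp
    show "\<forall>\<^sub>F n in sequentially. norm (xs n) \<le> d + inverse (real (Suc n))"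
      using near by (auto intro: always_eventually less_imp_le)
    show "(\<lambda>n. d + inverse (real (Suc n))) \<longlonglongrightarrow> d"
      using tendsto_add[OF tendsto_const LIMSEQ_inverse_real_of_nat, of d] by simp
  qed
  obtain u where u: "xs \<longlonglongrightarrow> u"
    using Cauchy_convergent[OF Cauchy_minimizing_sequence[OF \<open>convex S\<close> xs lower lim]]
    by (auto simp: convergent_def)
  have "norm u = d" using tendsto_norm[OF u] lim by (rule LIMSEQ_unique)
  then show ?thesis using that closed_sequentially[OF \<open>closed S\<close> xs u] lower by blast
qed

lemma cinner_eq_0_if_min_norm_on_line:
  fixes u n :: "'a::complex_inner"
  assumes min: "\<And>t. norm u \<le> norm (u + scaleC t n)"
  shows "cinner n u = 0"
proof (cases "n = 0")
  case True
  then show ?thesis by simp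
next
  case False
  then have nn: "(norm n)\<^sup>2 > 0" by simp
  define c where "c = cinner u n"
  define t where "t = - c / complex_of_real ((norm n)\<^sup>2)"
  have "cnj t * c = complex_of_real (- (cmod c)\<^sup>2 / (norm n)\<^sup>2)"
    by (simp add: t_def complex_norm_square[symmetric] mult.commute)
  moreover have "(cmod t * norm n)\<^sup>2 = (cmod c)\<^sup>2 / (norm n)\<^sup>2"
    using nn by (simp add: t_def norm_divide norm_mult power2_eq_square field_simps)
  ultimately have "(norm (u + scaleC t n))\<^sup>2 = (norm u)\<^sup>2 - (cmod c)\<^sup>2 / (norm n)\<^sup>2"
    by (simp add: power2_norm_add norm_scaleC cinner_scaleC_right c_def[symmetric])
  moreover have "(norm u)\<^sup>2 \<le> (norm (u + scaleC t n))\<^sup>2"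
    using min by (simp add: power_mono)
  ultimately have "(cmod c)\<^sup>2 \<le> 0"
    using nn by (simp add: divide_le_0_iff)
  then show ?thesis
    by (simp add: c_def cinner_commute[of n u])
qed

lemma riesz_representation:
  fixes \<phi> :: "'a::chilbert_space \<Rightarrow> complex"
  assumes lin: "bounded_linear \<phi>" and scaleC: "\<And>c x. \<phi> (scaleC c x) = c * \<phi> x"
  obtains z where "\<And>x. \<phi> x = cinner x z"
proof (cases "\<forall>x. \<phi> x = 0")
  case True
  then show ?thesis using that[of 0] by simp
next
  case False
  interpret \<phi>: bounded_linear \<phi> by (fact lin)
  obtain x0 where "\<phi> x0 \<noteq> 0" using False by blast
  define S where "S = \<phi> -` {1}"
  have "closed S"
    unfolding S_def by (intro closed_vimage linear_continuous_on lin) simp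
  moreover have "convex S"
    unfolding S_def by (intro convex_linear_vimage \<phi>.linear) simp
  moreover have "scaleC (1 / \<phi> x0) x0 \<in> S"
    using \<open>\<phi> x0 \<noteq> 0\<close> by (simp add: S_def scaleC)
  ultimately obtain u where "u \<in> S" and min: "\<And>w. w \<in> S \<Longrightarrow> norm u \<le> norm w"
    using closed_convex_min_norm_exists by blast
  then have "\<phi> u = 1" by (simp add: S_def)
  have orth: "cinner n u = 0" if "\<phi> n = 0" for n
    using \<open>\<phi> u = 1\<close> that min
    by (intro cinner_eq_0_if_min_norm_on_line) (simp add: S_def \<phi>.add scaleC)
  have "u \<noteq> 0" using \<open>\<phi> u = 1\<close> by auto
  have "\<phi> x = cinner x (scaleC (complex_of_real (1 / (norm u)\<^sup>2)) u)" for x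
  proof -
    have "cinner (x - scaleC (\<phi> x) u) u = 0"
      using \<open>\<phi> u = 1\<close> by (intro orth) (simp add: \<phi>.diff scaleC)
    then have "cinner x u = \<phi> x * complex_of_real ((norm u)\<^sup>2)"
      by (simp add: cinner_diff_left cinner_scaleC_left cinner_self)
    then show ?thesis using \<open>u \<noteq> 0\<close> by (simp add: cinner_scaleC_right)
  qed
  then show ?thesis by (rule that)
qed

lemma clinear_add: "clinear f \<Longrightarrow> f (x + y) = f x + f y"
  by (simp add: clinear_def)

lemma clinear_scaleC: "clinear f \<Longrightarrow> f (scaleC c x) = scaleC c (f x)"
  by (simp add: clinear_def)

lemma bounded_clinear_iff: "bounded_clinear f \<longleftrightarrow> clinear f \<and> bounded_linear f"
proof
  assume f: "bounded_clinear f"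
  then obtain K where "\<And>x. norm (f x) \<le> norm x * K" by (auto simp: bounded_clinear_def)
  with f show "clinear f \<and> bounded_linear f"
    by (auto simp: bounded_clinear_def clinear_add clinear_scaleC scaleR_scaleC
        intro: bounded_linear_intro)
next
  assume "clinear f \<and> bounded_linear f"
  then show "bounded_clinear f"
    unfolding bounded_clinear_def using bounded_linear.bounded by blast
qed

lemma bounded_clinear_compose:
  "bounded_clinear f \<Longrightarrow> bounded_clinear g \<Longrightarrow> bounded_clinear (\<lambda>x. f (g x))"
  by (simp add: bounded_clinear_iff bounded_linear_compose clinear_def)

lemma bounded_clinear_add:
  "bounded_clinear f \<Longrightarrow> bounded_clinear g \<Longrightarrow> bounded_clinear (\<lambda>x. f x + g x)"
  by (simp add: bounded_clinear_iff bounded_linear_add clinear_def scaleC_add_right)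

lemma bounded_clinear_scaleC: "bounded_clinear (scaleC c :: 'a::complex_inner \<Rightarrow> 'a)"
  unfolding bounded_clinear_def clinear_def
  by (auto simp: scaleC_add_right scaleC_scaleC mult.commute norm_scaleC intro!: exI[of _ "cmod c"])

lemma cinner_cadjoint:
  fixes L :: "'a::chilbert_space \<Rightarrow> 'b::complex_inner"
  assumes L: "bounded_clinear L"
  shows "cinner (L x) y = cinner x (cadjoint L y)"
proof -
  have "\<exists>z. \<forall>x. cinner (L x) y = cinner x z" for y
  proof -
    have "bounded_linear (\<lambda>x. cinner (L x) y)"
      using L by (auto simp: bounded_clinear_iff intro: bounded_linear_compose[OF cinner.bounded_linear_left])
    moreover have "cinner (L (scaleC c x)) y = c * cinner (L x) y" for c x
      using L by (simp add: bounded_clinear_def clinear_scaleC cinner_scaleC_left)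
    ultimately obtain z where "\<And>x. cinner (L x) y = cinner x z"
      by (rule riesz_representation) blast+
    then show ?thesis by blast
  qed
  then obtain A where A: "\<forall>x y. cinner (L x) y = cinner x (A y)" by metis
  moreover have "B = A" if "\<forall>x y. cinner (L x) y = cinner x (B y)" for B
  proof
    fix y
    have "cinner (B y - A y) (B y - A y) = 0"
      using A that by (simp add: cinner_diff_right)
    then show "B y = A y" by (simp add: cinner_eq_zero_iff)
  qed
  ultimately have "\<forall>x y. cinner (L x) y = cinner x (cadjoint L y)"
    unfolding cadjoint_def by (rule theI)
  then show ?thesis by blast
qed

lemma cinner_cadjoint_left:
  fixes L :: "'a::chilbert_space \<Rightarrow> 'b::complex_inner"
  assumes "bounded_clinear L"
  shows "cinner (cadjoint L y) x = cinner y (L x)"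
  by (metis assms cinner_cadjoint cinner_commute)

lemma sum_adjoint_self_eq_id_iff:
  fixes L1 L2 :: "'h::chilbert_space \<Rightarrow> 'h"
  assumes L1: "bounded_clinear L1" and L2: "bounded_clinear L2"
  shows "(\<lambda>x. cadjoint L1 (L1 x) + cadjoint L2 (L2 x)) = id
     \<longleftrightarrow> (\<forall>f. (norm (L1 f))\<^sup>2 + (norm (L2 f))\<^sup>2 = (norm f)\<^sup>2)"
    (is "?T = id \<longleftrightarrow> _")
proof -
  have lin1: "clinear L1" and lin2: "clinear L2"
    using L1 L2 by (simp_all add: bounded_clinear_def)
  have T: "cinner (?T x) y = cinner (L1 x) (L1 y) + cinner (L2 x) (L2 y)" for x y
    by (simp add: cinner_add_left cinner_cadjoint_left[OF L1] cinner_cadjoint_left[OF L2])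
  define D where "D x y = cinner (L1 x) (L1 y) + cinner (L2 x) (L2 y) - cinner x y" for x y
  have TD: "cinner (?T x - x) y = D x y" for x y
    by (simp add: D_def T cinner_diff_left)
  have "?T = id \<longleftrightarrow> (\<forall>x y. D x y = 0)"
  proof
    assume "\<forall>x y. D x y = 0"
    then have "cinner (?T x - x) (?T x - x) = 0" for x
      by (simp add: TD)
    then show "?T = id" by (auto simp: cinner_eq_zero_iff)
  qed (simp add: fun_eq_iff flip: TD)
  also have "\<dots> \<longleftrightarrow> (\<forall>x. D x x = 0)"
  proof (intro iffI allI)
    fix x y
    assume diagonal: "\<forall>x. D x x = 0"
    show "D x y = 0"
    proof (rule sesquilinear_eq_0_if_diagonal_eq_0[of D])
      show "D (x + y) z = D x z + D y z" for x y z
        by (simp add: D_def clinear_add[OF lin1] clinear_add[OF lin2] cinner_add_left)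
      show "D x (y + z) = D x y + D x z" for x y z
        by (simp add: D_def clinear_add[OF lin1] clinear_add[OF lin2] cinner_add_right)
      show "D (scaleC c x) y = c * D x y" for c x y
        by (simp add: D_def clinear_scaleC[OF lin1] clinear_scaleC[OF lin2]
            cinner_scaleC_left right_diff_distrib distrib_left)
      show "D x (scaleC c y) = cnj c * D x y" for c x y
        by (simp add: D_def clinear_scaleC[OF lin1] clinear_scaleC[OF lin2]
            cinner_scaleC_right right_diff_distrib distrib_left)
    qed (use diagonal in simp)
  qed simp
  also have "\<dots> \<longleftrightarrow> (\<forall>f. (norm (L1 f))\<^sup>2 + (norm (L2 f))\<^sup>2 = (norm f)\<^sup>2)"
  proof -
    have "D x x = complex_of_real ((norm (L1 x))\<^sup>2 + (norm (L2 x))\<^sup>2 - (norm x)\<^sup>2)" for x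
      by (simp add: D_def cinner_self)
    then show ?thesis by (simp only: of_real_eq_0_iff right_minus_eq)
  qed
  finally show ?thesis .
qed

lemma pythagorean_scaleC_iff:
  fixes \<alpha> \<beta> :: complex
  assumes "\<exists>x::'a::complex_inner. x \<noteq> 0"
  shows "(\<forall>f::'a. (norm (scaleC \<alpha> f))\<^sup>2 + (norm (scaleC \<beta> f))\<^sup>2 = (norm f)\<^sup>2)
    \<longleftrightarrow> (cmod \<alpha>)\<^sup>2 + (cmod \<beta>)\<^sup>2 = 1"
proof -
  have *: "(norm (scaleC \<alpha> f))\<^sup>2 + (norm (scaleC \<beta> f))\<^sup>2 = ((cmod \<alpha>)\<^sup>2 + (cmod \<beta>)\<^sup>2) * (norm f)\<^sup>2"
    for f :: 'a
    by (simp add: norm_scaleC power_mult_distrib algebra_simps)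
  obtain x :: 'a where "x \<noteq> 0" using assms by blast
  show ?thesis
    unfolding *
  proof
    assume "\<forall>f::'a. ((cmod \<alpha>)\<^sup>2 + (cmod \<beta>)\<^sup>2) * (norm f)\<^sup>2 = (norm f)\<^sup>2"
    then have "((cmod \<alpha>)\<^sup>2 + (cmod \<beta>)\<^sup>2) * (norm x)\<^sup>2 = (norm x)\<^sup>2" by blast
    moreover have "(norm x)\<^sup>2 \<noteq> 0" using \<open>x \<noteq> 0\<close> by simp
    ultimately show "(cmod \<alpha>)\<^sup>2 + (cmod \<beta>)\<^sup>2 = 1" by (simp only: mult_cancel_right2) simp
  qed simp
qed

section \<open>Strongly measurable sections\<close>

lemma strongly_measurable_compose2_approx:
  fixes F G :: "'w \<Rightarrow> 'k::complex_inner" and h :: "'k \<Rightarrow> 'k \<Rightarrow> 'b::metric_space"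
  assumes F: "strongly_measurable M F" and G: "strongly_measurable M G"
    and h: "\<And>xs ys x y. xs \<longlonglongrightarrow> x \<Longrightarrow> ys \<longlonglongrightarrow> y \<Longrightarrow> (\<lambda>i. h (xs i) (ys i)) \<longlonglongrightarrow> h x y"
  obtains s :: "nat \<Rightarrow> 'w \<Rightarrow> 'b"
  where "\<And>i. s i \<in> borel_measurable M" "\<And>i. finite (range (s i))"
    "\<And>\<omega>. \<omega> \<in> space M \<Longrightarrow> (\<lambda>i. s i \<omega>) \<longlonglongrightarrow> h (F \<omega>) (G \<omega>)"
proof -
  obtain s where s: "\<And>i. s i \<in> borel_measurable M" "\<And>i. finite (range (s i))"
    "\<And>\<omega>. \<omega> \<in> space M \<Longrightarrow> (\<lambda>i. s i \<omega>) \<longlonglongrightarrow> F \<omega>"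
    using F unfolding strongly_measurable_def by blast
  obtain t where t: "\<And>i. t i \<in> borel_measurable M" "\<And>i. finite (range (t i))"
    "\<And>\<omega>. \<omega> \<in> space M \<Longrightarrow> (\<lambda>i. t i \<omega>) \<longlonglongrightarrow> G \<omega>"
    using G unfolding strongly_measurable_def by blast
  have "simple_function M (s i)" "simple_function M (t i)" for i
    using s(1,2) t(1,2)
    by (auto intro!: simple_function_borel_measurable intro: finite_subset[OF image_mono[OF subset_UNIV]])
  then have "simple_function M (\<lambda>\<omega>. h (s i \<omega>) (t i \<omega>))" for i
    by (rule simple_function_compose2)
  moreover have "finite (range (\<lambda>\<omega>. h (s i \<omega>) (t i \<omega>)))" for i
  proof (rule finite_subset)
    show "range (\<lambda>\<omega>. h (s i \<omega>) (t i \<omega>)) \<subseteq> case_prod h ` (range (s i) \<times> range (t i))"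
      by auto
  qed (use s(2) t(2) in simp)
  ultimately show ?thesis
    using that[of "\<lambda>i \<omega>. h (s i \<omega>) (t i \<omega>)"] s(3) t(3) h
    by (simp add: borel_measurable_simple_function)
qed

lemma borel_measurable_compose2_strongly_measurable:
  fixes F G :: "'w \<Rightarrow> 'k::complex_inner" and h :: "'k \<Rightarrow> 'k \<Rightarrow> 'b::metric_space"
  assumes "strongly_measurable M F" "strongly_measurable M G"
    and "\<And>xs ys x y. xs \<longlonglongrightarrow> x \<Longrightarrow> ys \<longlonglongrightarrow> y \<Longrightarrow> (\<lambda>i. h (xs i) (ys i)) \<longlonglongrightarrow> h x y"
  shows "(\<lambda>\<omega>. h (F \<omega>) (G \<omega>)) \<in> borel_measurable M"
proof -
  obtain s :: "nat \<Rightarrow> 'w \<Rightarrow> 'b" where "\<And>i. s i \<in> borel_measurable M"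
    "\<And>\<omega>. \<omega> \<in> space M \<Longrightarrow> (\<lambda>i. s i \<omega>) \<longlonglongrightarrow> h (F \<omega>) (G \<omega>)"
    by (rule strongly_measurable_compose2_approx[where h=h, OF assms]) auto
  then show ?thesis by (rule borel_measurable_LIMSEQ_metric)
qed

lemma strongly_measurable_add:
  fixes F G :: "'w \<Rightarrow> 'k::complex_inner"
  assumes "strongly_measurable M F" "strongly_measurable M G"
  shows "strongly_measurable M (\<lambda>\<omega>. F \<omega> + G \<omega>)"
proof -
  obtain s :: "nat \<Rightarrow> 'w \<Rightarrow> 'k" where "\<And>i. s i \<in> borel_measurable M" "\<And>i. finite (range (s i))"
    "\<And>\<omega>. \<omega> \<in> space M \<Longrightarrow> (\<lambda>i. s i \<omega>) \<longlonglongrightarrow> F \<omega> + G \<omega>"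
    by (rule strongly_measurable_compose2_approx[where h="(+)", OF assms tendsto_add]) auto
  then show ?thesis unfolding strongly_measurable_def by blast
qed

lemma strongly_measurable_cong:
  assumes "\<And>\<omega>. \<omega> \<in> space M \<Longrightarrow> F \<omega> = G \<omega>"
  shows "strongly_measurable M F \<longleftrightarrow> strongly_measurable M G"
  using assms by (simp add: strongly_measurable_def)

lemma strongly_measurable_borel_measurable:
  "strongly_measurable M F \<Longrightarrow> F \<in> borel_measurable M"
  unfolding strongly_measurable_def by (metis borel_measurable_LIMSEQ_metric)

section \<open>Combining strongly disjoint Parseval frames\<close>

lemma parseval_cont_g_frame_iff:
  "parseval_cont_g_frame M K \<Lambda> \<longleftrightarrow>
     g_family M K \<Lambda> \<and> (\<forall>f. (\<integral>\<^sup>+\<omega>. ennreal ((norm (\<Lambda> \<omega> f))\<^sup>2) \<partial>M) = ennreal ((norm f)\<^sup>2))"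
  unfolding parseval_cont_g_frame_def cont_g_frame_def by (auto intro!: exI[of _ 1])

lemma parseval_integrable_norm_sq:
  assumes "parseval_cont_g_frame M K \<Lambda>"
  shows "integrable M (\<lambda>\<omega>. (norm (\<Lambda> \<omega> f))\<^sup>2)"
    and "(\<integral>\<omega>. (norm (\<Lambda> \<omega> f))\<^sup>2 \<partial>M) = (norm f)\<^sup>2"
proof -
  have "(\<lambda>\<omega>. \<Lambda> \<omega> f) \<in> borel_measurable M"
    using assms by (auto simp: parseval_cont_g_frame_iff g_family_def
        intro: strongly_measurable_borel_measurable)
  then have "(\<lambda>\<omega>. (norm (\<Lambda> \<omega> f))\<^sup>2) \<in> borel_measurable M" by measurable
  then show "integrable M (\<lambda>\<omega>. (norm (\<Lambda> \<omega> f))\<^sup>2)" "(\<integral>\<omega>. (norm (\<Lambda> \<omega> f))\<^sup>2 \<partial>M) = (norm f)\<^sup>2"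
    using assms nn_integral_eq_integrable[of "\<lambda>\<omega>. (norm (\<Lambda> \<omega> f))\<^sup>2" M "(norm f)\<^sup>2"]
    by (auto simp: parseval_cont_g_frame_iff)
qed

lemma integrable_cinner_parseval:
  fixes \<Lambda> \<Theta> :: "'w \<Rightarrow> 'h::complex_inner \<Rightarrow> 'k::complex_inner"
  assumes \<Lambda>: "parseval_cont_g_frame M K \<Lambda>" and \<Theta>: "parseval_cont_g_frame M K \<Theta>"
  shows "integrable M (\<lambda>\<omega>. cinner (\<Lambda> \<omega> g) (\<Theta> \<omega> h))"
proof (rule Bochner_Integration.integrable_bound)
  show "integrable M (\<lambda>\<omega>. (norm (\<Lambda> \<omega> g))\<^sup>2 + (norm (\<Theta> \<omega> h))\<^sup>2)"
    using parseval_integrable_norm_sq(1)[OF \<Lambda>] parseval_integrable_norm_sq(1)[OF \<Theta>] by auto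
  show "(\<lambda>\<omega>. cinner (\<Lambda> \<omega> g) (\<Theta> \<omega> h)) \<in> borel_measurable M"
    using \<Lambda> \<Theta> cinner.tendsto
    by (auto simp: parseval_cont_g_frame_iff g_family_def
        intro!: borel_measurable_compose2_strongly_measurable)
  have "norm (cinner a b) \<le> norm ((norm a)\<^sup>2 + (norm b)\<^sup>2)" for a b :: 'k
  proof -
    have "norm (cinner a b) \<le> 2 * norm a * norm b"
      using norm_cinner_le[of a b] mult_nonneg_nonneg[OF norm_ge_zero[of a] norm_ge_zero[of b]]
      by linarith
    also have "\<dots> \<le> (norm a)\<^sup>2 + (norm b)\<^sup>2" by (rule sum_squares_bound)
    finally show ?thesis by simp
  qed
  then show "AE \<omega> in M. norm (cinner (\<Lambda> \<omega> g) (\<Theta> \<omega> h))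
      \<le> norm ((norm (\<Lambda> \<omega> g))\<^sup>2 + (norm (\<Theta> \<omega> h))\<^sup>2)"
    by simp
qed

lemma nn_integral_norm_sq_add_strongly_disjoint:
  assumes \<Lambda>: "parseval_cont_g_frame M K \<Lambda>" and \<Theta>: "parseval_cont_g_frame M K \<Theta>"
    and disj: "strongly_disjoint M \<Lambda> \<Theta>"
  shows "(\<integral>\<^sup>+\<omega>. ennreal ((norm (\<Lambda> \<omega> g + \<Theta> \<omega> h))\<^sup>2) \<partial>M) = ennreal ((norm g)\<^sup>2 + (norm h)\<^sup>2)"
proof -
  note int_\<Lambda> = parseval_integrable_norm_sq[OF \<Lambda>, of g]
    and int_\<Theta> = parseval_integrable_norm_sq[OF \<Theta>, of h]
    and int_cinner = integrable_cinner_parseval[OF \<Lambda> \<Theta>, of g h]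
  have "(\<integral>\<omega>. cinner (\<Lambda> \<omega> g) (\<Theta> \<omega> h) \<partial>M) = 0"
    using disj by (auto simp: strongly_disjoint_def l2_inner_def analysis_op_def)
  then have "(\<integral>\<omega>. Re (cinner (\<Lambda> \<omega> g) (\<Theta> \<omega> h)) \<partial>M) = 0"
    using integral_bounded_linear[OF bounded_linear_Re int_cinner] by simp
  moreover have "integrable M (\<lambda>\<omega>. Re (cinner (\<Lambda> \<omega> g) (\<Theta> \<omega> h)))"
    using int_cinner by (rule integrable_bounded_linear[OF bounded_linear_Re])
  ultimately have "integrable M (\<lambda>\<omega>. (norm (\<Lambda> \<omega> g + \<Theta> \<omega> h))\<^sup>2)"
    and "(\<integral>\<omega>. (norm (\<Lambda> \<omega> g + \<Theta> \<omega> h))\<^sup>2 \<partial>M) = (norm g)\<^sup>2 + (norm h)\<^sup>2"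
    using int_\<Lambda> int_\<Theta> by (simp_all add: power2_norm_add)
  then show ?thesis by (simp add: nn_integral_eq_integral)
qed

lemma g_family_combination:
  assumes K: "\<forall>\<omega>\<in>space M. closed_csubspace (K \<omega>)"
    and \<Lambda>: "g_family M K \<Lambda>" and \<Theta>: "g_family M K \<Theta>"
    and L1: "bounded_clinear L1" and L2: "bounded_clinear L2"
    and \<Gamma>: "\<And>\<omega> f. \<omega> \<in> space M \<Longrightarrow> \<Gamma> \<omega> f = \<Lambda> \<omega> (L1 f) + \<Theta> \<omega> (L2 f)"
  shows "g_family M K \<Gamma>"
proof -
  have "bounded_clinear (\<Gamma> \<omega>) \<and> range (\<Gamma> \<omega>) \<subseteq> K \<omega>" if \<omega>: "\<omega> \<in> space M" for \<omega>
  proof -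
    have "\<Gamma> \<omega> = (\<lambda>f. \<Lambda> \<omega> (L1 f) + \<Theta> \<omega> (L2 f))" using \<Gamma> \<omega> by auto
    moreover have "bounded_clinear (\<Lambda> \<omega>)" "range (\<Lambda> \<omega>) \<subseteq> K \<omega>"
      "bounded_clinear (\<Theta> \<omega>)" "range (\<Theta> \<omega>) \<subseteq> K \<omega>"
      using \<Lambda> \<Theta> \<omega> by (auto simp: g_family_def)
    moreover have "x + y \<in> K \<omega>" if "x \<in> K \<omega>" "y \<in> K \<omega>" for x y
      using K \<omega> that by (simp add: closed_csubspace_def)
    ultimately show ?thesis
      using L1 L2 by (auto intro!: bounded_clinear_add bounded_clinear_compose[of "\<Lambda> \<omega>"]
          bounded_clinear_compose[of "\<Theta> \<omega>"])
  qed
  moreover have "strongly_measurable M (\<lambda>\<omega>. \<Gamma> \<omega> f)" for f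
  proof -
    have "strongly_measurable M (\<lambda>\<omega>. \<Lambda> \<omega> (L1 f) + \<Theta> \<omega> (L2 f))"
      using \<Lambda> \<Theta> by (simp add: g_family_def strongly_measurable_add)
    then show ?thesis
      using \<Gamma> strongly_measurable_cong[of M "\<lambda>\<omega>. \<Gamma> \<omega> f" "\<lambda>\<omega>. \<Lambda> \<omega> (L1 f) + \<Theta> \<omega> (L2 f)"]
      by simp
  qed
  ultimately show ?thesis by (simp add: g_family_def)
qed

lemma parseval_combination_iff:
  assumes K: "\<forall>\<omega>\<in>space M. closed_csubspace (K \<omega>)"
    and \<Lambda>: "parseval_cont_g_frame M K \<Lambda>" and \<Theta>: "parseval_cont_g_frame M K \<Theta>"
    and disj: "strongly_disjoint M \<Lambda> \<Theta>"
    and L1: "bounded_clinear L1" and L2: "bounded_clinear L2"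
    and \<Gamma>: "\<And>\<omega> f. \<omega> \<in> space M \<Longrightarrow> \<Gamma> \<omega> f = \<Lambda> \<omega> (L1 f) + \<Theta> \<omega> (L2 f)"
  shows "parseval_cont_g_frame M K \<Gamma> \<longleftrightarrow> (\<forall>f. (norm (L1 f))\<^sup>2 + (norm (L2 f))\<^sup>2 = (norm f)\<^sup>2)"
proof -
  have "g_family M K \<Lambda>" "g_family M K \<Theta>"
    using \<Lambda> \<Theta> by (simp_all add: parseval_cont_g_frame_iff)
  then have "g_family M K \<Gamma>"
    by (rule g_family_combination[where \<Gamma>=\<Gamma> and \<Lambda>=\<Lambda> and \<Theta>=\<Theta>, OF K _ _ L1 L2 \<Gamma>])
  moreover have "(\<integral>\<^sup>+\<omega>. ennreal ((norm (\<Gamma> \<omega> f))\<^sup>2) \<partial>M) = ennreal ((norm (L1 f))\<^sup>2 + (norm (L2 f))\<^sup>2)"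
    for f
    using nn_integral_norm_sq_add_strongly_disjoint[OF \<Lambda> \<Theta> disj, of "L1 f" "L2 f"] \<Gamma>
      nn_integral_cong[of M "\<lambda>\<omega>. ennreal ((norm (\<Gamma> \<omega> f))\<^sup>2)"]
    by simp
  ultimately show ?thesis by (simp add: parseval_cont_g_frame_iff del: ennreal_plus)
qed

theorem corollary2p8:
  fixes M :: "'w measure"
    and K :: "'w \<Rightarrow> 'k::chilbert_space set"
    and \<Lambda> \<Theta> :: "'w \<Rightarrow> 'h::chilbert_space \<Rightarrow> 'k"
    and L1 L2 :: "'h \<Rightarrow> 'h"
  assumes nontriv: "\<exists>x::'h. x \<noteq> 0"
    and K: "\<forall>\<omega>\<in>space M. closed_csubspace (K \<omega>)"
    and \<Lambda>: "parseval_cont_g_frame M K \<Lambda>"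
    and \<Theta>: "parseval_cont_g_frame M K \<Theta>"
    and disj: "strongly_disjoint M \<Lambda> \<Theta>"
    and L1: "bounded_clinear L1"
    and L2: "bounded_clinear L2"
  shows "((\<lambda>x. cadjoint L1 (L1 x) + cadjoint L2 (L2 x)) = id
            \<longleftrightarrow> parseval_cont_g_frame M K (\<lambda>\<omega> f. \<Lambda> \<omega> (L1 f) + \<Theta> \<omega> (L2 f)))
      \<and> (\<forall>\<alpha> \<beta> :: complex.
            parseval_cont_g_frame M K (\<lambda>\<omega> f. scaleC \<alpha> (\<Lambda> \<omega> f) + scaleC \<beta> (\<Theta> \<omega> f))
            \<longleftrightarrow> (cmod \<alpha>)\<^sup>2 + (cmod \<beta>)\<^sup>2 = 1)"
proof
  show "(\<lambda>x. cadjoint L1 (L1 x) + cadjoint L2 (L2 x)) = id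
      \<longleftrightarrow> parseval_cont_g_frame M K (\<lambda>\<omega> f. \<Lambda> \<omega> (L1 f) + \<Theta> \<omega> (L2 f))"
    using sum_adjoint_self_eq_id_iff[OF L1 L2]
      parseval_combination_iff[OF K \<Lambda> \<Theta> disj L1 L2, of "\<lambda>\<omega> f. \<Lambda> \<omega> (L1 f) + \<Theta> \<omega> (L2 f)"]
    by simp
  show "\<forall>\<alpha> \<beta> :: complex.
      parseval_cont_g_frame M K (\<lambda>\<omega> f. scaleC \<alpha> (\<Lambda> \<omega> f) + scaleC \<beta> (\<Theta> \<omega> f))
      \<longleftrightarrow> (cmod \<alpha>)\<^sup>2 + (cmod \<beta>)\<^sup>2 = 1"
  proof (intro allI)
    fix \<alpha> \<beta> :: complex
    have "scaleC \<alpha> (\<Lambda> \<omega> f) + scaleC \<beta> (\<Theta> \<omega> f) = \<Lambda> \<omega> (scaleC \<alpha> f) + \<Theta> \<omega> (scaleC \<beta> f)"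
      if "\<omega> \<in> space M" for \<omega> f
      using \<Lambda> \<Theta> that
      by (auto simp: parseval_cont_g_frame_iff g_family_def bounded_clinear_def clinear_scaleC)
    then show "parseval_cont_g_frame M K (\<lambda>\<omega> f. scaleC \<alpha> (\<Lambda> \<omega> f) + scaleC \<beta> (\<Theta> \<omega> f))
        \<longleftrightarrow> (cmod \<alpha>)\<^sup>2 + (cmod \<beta>)\<^sup>2 = 1"
      using parseval_combination_iff[OF K \<Lambda> \<Theta> disj bounded_clinear_scaleC bounded_clinear_scaleC]
        pythagorean_scaleC_iff[OF nontriv]
      by simp
  qed
qed

end
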